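(* Let $\alpha,\beta,\gamma\in\mathbb{Z}_2^n$ with $\alpha\ne0$, let $\omega=\omega(\alpha,\beta,\gamma)$ and $\omega'=\omega(-\alpha,\beta,\gamma)$. Then for all $i\in\{0,\dots,7\}$, $$e_iA_{\omega_0}\cdots A_{\omega_{n-1}}e_0^T=e_{i\oplus4}A_{\omega'_0}\cdots A_{\omega'_{n-1}}e_0^T.$$
   Context: For $x\in\mathbb{Z}_2^n$, $x=(x_0,\dots,x_{n-1})$ is identified with the integer $\sum_i x_i2^{n-1-i}$ and $-x$ is computed modulo $2^n$. For $\alpha,\beta,\gamma\in\mathbb{Z}_2^n$, $\omega(\alpha,\beta,\gamma)_i=4\alpha_i+2\beta_i+\gamma_i$. Indices $0,\dots,7$ are identified with $\mathbb{Z}_2^3$ via $(p_0,p_1,p_2)\leftrightarrow4p_0+2p_1+p_2$ (so $\oplus$ is bitwise XOR of 3-bit vectors); $e_0,\dots,e_7$ are the standard basis row vectors of $\mathbb{Q}^8$. $A_0$ is $\frac14$ times the $8\times8$ matrix with rows $(4,0,0,1,0,1,1,0)$, $(0,0,0,1,0,1,0,0)$, $(0,0,0,1,0,0,1,0)$, $(0,0,0,1,0,0,0,0)$, $(0,0,0,0,0,1,1,0)$, $(0,0,0,0,0,1,0,0)$, $(0,0,0,0,0,0,1,0)$, $(0,\dots,0)$, and $(A_k)_{i,j}=(A_0)_{i\oplus k,j\oplus k}$. *)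

theory Defs
  imports Main "Jordan_Normal_Form.Matrix"
begin

text \<open>Elements of Z_2^n are bit lists x = [x_0,...,x_{n-1}] of length n;
  x is identified with the integer sum_i x_i 2^(n-1-i) (x_0 most significant).\<close>

definition bits_val :: "bool list \<Rightarrow> nat" where
  "bits_val x = (\<Sum>i<length x. (if x ! i then 2 ^ (length x - 1 - i) else 0))"

definition bits_of_val :: "nat \<Rightarrow> nat \<Rightarrow> bool list" where
  "bits_of_val n v = map (\<lambda>i. odd (v div 2 ^ (n - 1 - i))) [0..<n]"

definition bits_neg :: "bool list \<Rightarrow> bool list" where
  "bits_neg x = bits_of_val (length x)
      ((2 ^ length x - bits_val x) mod 2 ^ length x)"

definition omega :: "bool list \<Rightarrow> bool list \<Rightarrow> bool list \<Rightarrow> nat list" where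
  "omega a b c = map (\<lambda>i. 4 * of_bool (a ! i) + 2 * of_bool (b ! i) + of_bool (c ! i))
                    [0..<length a]"

definition A0_rows :: "rat list list" where
  "A0_rows = [[4,0,0,1,0,1,1,0],
              [0,0,0,1,0,1,0,0],
              [0,0,0,1,0,0,1,0],
              [0,0,0,1,0,0,0,0],
              [0,0,0,0,0,1,1,0],
              [0,0,0,0,0,1,0,0],
              [0,0,0,0,0,0,1,0],
              [0,0,0,0,0,0,0,0]]"

definition A0 :: "rat mat" where
  "A0 = mat 8 8 (\<lambda>(i, j). A0_rows ! i ! j / 4)"

definition Amat :: "nat \<Rightarrow> rat mat" where
  "Amat k = mat 8 8 (\<lambda>(i, j). A0 $$ (xor i k, xor j k))"

definition prodA :: "nat list \<Rightarrow> rat mat" where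
  "prodA w = foldr (\<lambda>k M. Amat k * M) w (1\<^sub>m 8)"

end

theory Submission
  imports Defs
begin

(* Let p be the position of the last True in alpha, i.e. of its lowest set bit. Then -alpha agrees
   with alpha from p on and is the complement of alpha before p, so omega' arises from omega by
   replacing each letter k before p by k xor 4, while omega_p >= 4 and all letters after p are < 4.
   The A_k with k < 4 are block upper triangular for the splitting {0..3}, {4..7}, so the product
   of the letters after p maps e_0 into the span of e_0, ..., e_3. Rows i and i xor 4 of A_k, k >= 4,
   agree on the columns 0..3, so applying A_{omega_p} yields a vector invariant under the swap
   P : e_j -> e_(j xor 4). Finally A_(k xor 4) = P A_k P, so the modified prefix is the old prefix
   conjugated by P; P moves row i to row i xor 4 and is absorbed by the invariant vector. *)

lemma xor_less_8:
  assumes "(i::nat) < 8" "k < 8"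
  shows "xor i k < 8"
proof -
  have "take_bit 3 i = i" "take_bit 3 k = k"
    using assms by (simp_all add: take_bit_nat_eq_self_iff)
  then have "xor i k = take_bit 3 (xor i k)" by (metis take_bit_xor)
  also have "\<dots> < 2 ^ 3" by (rule take_bit_nat_less_exp)
  finally show ?thesis by simp
qed

lemma less_4_iff_bit: "(i::nat) < 8 \<Longrightarrow> i < 4 \<longleftrightarrow> \<not> bit i 2"
  by (simp add: bit_iff_odd) presburger

lemma xor_less_4_iff: "(i::nat) < 8 \<Longrightarrow> k < 8 \<Longrightarrow> xor i k < 4 \<longleftrightarrow> (i < 4 \<longleftrightarrow> k < 4)"
  by (simp add: less_4_iff_bit xor_less_8 bit_xor_iff)

lemma sum_xor_reindex: "(l::nat) < 8 \<Longrightarrow> (\<Sum>s<8. f (xor s l)) = (\<Sum>s<8. f s)"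
  by (rule sum.reindex_bij_witness[where i="\<lambda>s. xor s l" and j="\<lambda>s. xor s l"])
    (auto simp: xor_less_8 xor.assoc)

lemma xor_digit:
  "xor (4 * of_bool a + 2 * of_bool b + of_bool c :: nat) 4 = 4 * of_bool (\<not> a) + 2 * of_bool b + of_bool c"
  by (cases a; cases b; cases c) (simp_all add: numeral_3_eq_3[symmetric] numeral_2_eq_2[symmetric])

lemma last_True_decomp:
  assumes "True \<in> set xs"
  obtains pre m where "xs = pre @ True # replicate m False"
proof -
  obtain pre zs where "xs = pre @ True # zs" "True \<notin> set zs"
    using split_list_last[OF assms] by blast
  moreover have "zs = replicate (length zs) False"
    using \<open>True \<notin> set zs\<close> by (metis (full_types) replicate_length_same)
  ultimately have "xs = pre @ True # replicate (length zs) False"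
    by simp
  then show thesis by (rule that)
qed

lemma bits_val_Nil: "bits_val [] = 0"
  by (simp add: bits_val_def)

lemma bits_val_Cons: "bits_val (a # xs) = of_bool a * 2 ^ length xs + bits_val xs"
proof -
  have "Suc (length xs) - 1 - Suc i = length xs - 1 - i" for i by arith
  then show ?thesis
    unfolding bits_val_def by (simp only: length_Cons sum.lessThan_Suc_shift nth_Cons_Suc) simp
qed

lemma bits_val_less: "bits_val xs < 2 ^ length xs"
  by (induction xs) (auto simp: bits_val_Cons bits_val_Nil)

lemma bits_val_append: "bits_val (xs @ ys) = bits_val xs * 2 ^ length ys + bits_val ys"
  by (induction xs) (auto simp: bits_val_Cons bits_val_Nil power_add algebra_simps)

lemma bits_val_map_Not: "bits_val (map Not xs) + bits_val xs + 1 = 2 ^ length xs"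
  by (induction xs) (auto simp: bits_val_Cons bits_val_Nil)

lemma bits_val_replicate_False: "bits_val (replicate m False) = 0"
  by (induction m) (auto simp: bits_val_Cons bits_val_Nil)

lemma bits_of_val_Suc: "bits_of_val (Suc n) v = odd (v div 2 ^ n) # bits_of_val n v"
  unfolding bits_of_val_def by (simp add: upt_conv_Cons map_Suc_upt[symmetric] del: upt_Suc)

lemma bits_of_val_mod: "bits_of_val n (v mod 2 ^ n) = bits_of_val n v"
  unfolding bits_of_val_def
  by (simp add: bit_iff_odd[symmetric] bit_take_bit_iff flip: take_bit_eq_mod)

lemma bits_of_val_bits_val: "bits_of_val (length xs) (bits_val xs) = xs"
proof (induction xs)
  case (Cons a xs)
  have "bits_val (a # xs) div 2 ^ length xs = of_bool a"
    and "bits_val (a # xs) mod 2 ^ length xs = bits_val xs"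
    using bits_val_less[of xs] by (simp_all add: bits_val_Cons)
  then show ?case
    using Cons.IH bits_of_val_mod[of "length xs" "bits_val (a # xs)"] by (simp add: bits_of_val_Suc)
qed (simp add: bits_of_val_def)

lemma bits_neg_last_True:
  "bits_neg (pre @ True # replicate m False) = map Not pre @ True # replicate m False"
  (is "bits_neg ?x = ?y")
proof -
  have "bits_val ?y + bits_val ?x = (bits_val (map Not pre) + bits_val pre + 1) * 2 ^ Suc m"
    by (simp add: bits_val_append bits_val_Cons bits_val_replicate_False algebra_simps)
  also have "\<dots> = 2 ^ length pre * 2 ^ Suc m"
    by (simp only: bits_val_map_Not)
  also have "\<dots> = 2 ^ length ?x"
    by (simp add: power_add)
  finally have "(2 ^ length ?x - bits_val ?x) mod 2 ^ length ?x = bits_val ?y"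
    using bits_val_less[of ?y] by simp
  then show ?thesis
    using bits_of_val_bits_val[of ?y] by (simp add: bits_neg_def)
qed

lemma omega_append:
  assumes "length b1 = length a1" "length c1 = length a1"
  shows "omega (a1 @ a2) (b1 @ b2) (c1 @ c2) = omega a1 b1 c1 @ omega a2 b2 c2"
proof (rule nth_equalityI)
  fix i assume "i < length (omega (a1 @ a2) (b1 @ b2) (c1 @ c2))"
  then have "i < length a1 + length a2" by (simp add: omega_def)
  then show "omega (a1 @ a2) (b1 @ b2) (c1 @ c2) ! i = (omega a1 b1 c1 @ omega a2 b2 c2) ! i"
    using assms by (cases "i < length a1") (simp_all add: omega_def nth_append)
qed (simp add: omega_def)

lemma omega_Cons:
  "omega (a # as) (b # bs) (c # cs) = (4 * of_bool a + 2 * of_bool b + of_bool c) # omega as bs cs"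
  using omega_append[of "[b]" "[a]" "[c]" as bs cs] by (simp add: omega_def)

lemma omega_map_Not: "omega (map Not a) b c = map (\<lambda>k. xor k 4) (omega a b c)"
  by (simp add: omega_def xor_digit)

lemma omega_replicate_False_less_4: "k \<in> set (omega (replicate m False) b c) \<Longrightarrow> k < 4"
  by (auto simp: omega_def)

lemma mult_mat_entry:
  "A \<in> carrier_mat n m \<Longrightarrow> B \<in> carrier_mat m q \<Longrightarrow> i < n \<Longrightarrow> j < q
   \<Longrightarrow> (A * B) $$ (i, j) = (\<Sum>s<m. A $$ (i, s) * B $$ (s, j))"
  by (simp add: scalar_prod_def lessThan_atLeast0)

(* The following two table checks are the only properties of A_0 the proof uses. *)

lemma A0_lower_left_zero:
  assumes "4 \<le> a" "a < 8" "b < 4"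
  shows "A0 $$ (a, b) = 0"
proof -
  have "a \<in> {4,5,6,7}" "b \<in> {0,1,2,3}"
    using assms by auto
  then show ?thesis by (auto simp: A0_def A0_rows_def)
qed

lemma A0_right_rows_flip:
  assumes "a < 8" "4 \<le> b" "b < 8"
  shows "A0 $$ (xor a 4, b) = A0 $$ (a, b)"
proof -
  have "a \<in> {0,1,2,3,4,5,6,7}" "b \<in> {4,5,6,7}"
    using assms by auto
  then show ?thesis by (auto simp: A0_def A0_rows_def)
qed

lemma Amat_carrier: "Amat k \<in> carrier_mat 8 8"
  by (simp add: Amat_def)

lemma Amat_entry: "i < 8 \<Longrightarrow> j < 8 \<Longrightarrow> Amat k $$ (i, j) = A0 $$ (xor i k, xor j k)"
  by (simp add: Amat_def)

lemma Amat_xor: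
  "i < 8 \<Longrightarrow> j < 8 \<Longrightarrow> l < 8 \<Longrightarrow> Amat (xor k l) $$ (i, j) = Amat k $$ (xor i l, xor j l)"
  by (simp add: Amat_entry xor_less_8 xor.left_commute xor.commute)

lemma Amat_rows_flip:
  assumes "4 \<le> k" "k < 8" "i < 8" "j < 4"
  shows "Amat k $$ (xor i 4, j) = Amat k $$ (i, j)"
proof -
  have "4 \<le> xor j k" "xor j k < 8" "xor i k < 8"
    using assms xor_less_4_iff[of j k] by (simp_all add: xor_less_8)
  moreover have "xor (xor i 4) k = xor (xor i k) 4"
    by (simp add: ac_simps)
  ultimately show ?thesis
    using assms by (simp add: Amat_entry xor_less_8 A0_right_rows_flip)
qed

lemma prodA_Cons: "prodA (k # w) = Amat k * prodA w"
  by (simp add: prodA_def)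

lemma prodA_carrier: "prodA w \<in> carrier_mat 8 8"
  by (induction w) (auto simp: prodA_def Amat_def)

lemma prodA_append: "prodA (u @ w) = prodA u * prodA w"
proof (induction u)
  case Nil
  show ?case using prodA_carrier[of w] by (simp add: prodA_def)
next
  case (Cons k u)
  then show ?case
    by (simp add: prodA_Cons assoc_mult_mat[OF Amat_carrier prodA_carrier prodA_carrier])
qed

lemma prodA_map_xor:
  assumes "l < 8" "i < 8" "j < 8"
  shows "prodA (map (\<lambda>k. xor k l) w) $$ (i, j) = prodA w $$ (xor i l, xor j l)"
  using assms(2,3)
proof (induction w arbitrary: i j)
  case Nil
  then show ?case
    by (auto simp: prodA_def xor_less_8 assms(1) xor.assoc dest: arg_cong[where f="\<lambda>x. xor x l"])
next
  case (Cons k w)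
  have "prodA (map (\<lambda>k. xor k l) (k # w)) $$ (i, j)
      = (\<Sum>s<8. Amat k $$ (xor i l, xor s l) * prodA w $$ (xor s l, xor j l))"
    using Cons by (simp add: prodA_Cons mult_mat_entry[OF Amat_carrier prodA_carrier] Amat_xor assms(1))
  also have "\<dots> = (\<Sum>s<8. Amat k $$ (xor i l, s) * prodA w $$ (s, xor j l))"
    by (rule sum_xor_reindex[OF assms(1)])
  also have "\<dots> = prodA (k # w) $$ (xor i l, xor j l)"
    using Cons.prems assms(1)
    by (simp add: prodA_Cons mult_mat_entry[OF Amat_carrier prodA_carrier] xor_less_8)
  finally show ?case .
qed

definition block_upper :: "'a::zero mat \<Rightarrow> bool" where
  "block_upper M \<longleftrightarrow> (\<forall>i\<in>{4..<8}. \<forall>j<4. M $$ (i, j) = 0)"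

lemma block_upper_mult:
  fixes A B :: "'a::semiring_0 mat"
  assumes "A \<in> carrier_mat 8 8" "B \<in> carrier_mat 8 8" "block_upper A" "block_upper B"
  shows "block_upper (A * B)"
  unfolding block_upper_def
proof (intro ballI allI impI)
  fix i j :: nat assume "i \<in> {4..<8}" "j < 4"
  then have "A $$ (i, s) * B $$ (s, j) = 0" if "s < 8" for s
    using assms(3,4) that by (cases "s < 4") (auto simp: block_upper_def)
  then show "(A * B) $$ (i, j) = 0"
    using \<open>i \<in> {4..<8}\<close> \<open>j < 4\<close> by (simp add: mult_mat_entry[OF assms(1,2)])
qed

lemma block_upper_Amat:
  assumes "k < 4"
  shows "block_upper (Amat k)"
  unfolding block_upper_def
proof (intro ballI allI impI)
  fix i j :: nat assume "i \<in> {4..<8}" "j < 4"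
  then show "Amat k $$ (i, j) = 0"
    using assms xor_less_4_iff[of i k] xor_less_4_iff[of j k]
    by (simp add: Amat_entry xor_less_8 A0_lower_left_zero)
qed

lemma block_upper_prodA: "\<forall>k\<in>set w. k < 4 \<Longrightarrow> block_upper (prodA w)"
proof (induction w)
  case Nil
  show ?case by (simp add: block_upper_def prodA_def)
next
  case (Cons k w)
  then show ?case
    by (simp add: prodA_Cons block_upper_mult Amat_carrier prodA_carrier block_upper_Amat)
qed

lemma Amat_mult_rows_flip:
  assumes "4 \<le> k" "k < 8" "M \<in> carrier_mat 8 8" "block_upper M" "i < 8" "j < 4"
  shows "(Amat k * M) $$ (xor i 4, j) = (Amat k * M) $$ (i, j)"
proof -
  have "Amat k $$ (xor i 4, s) * M $$ (s, j) = Amat k $$ (i, s) * M $$ (s, j)" if "s < 8" for s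
    using assms that Amat_rows_flip by (cases "s < 4") (auto simp: block_upper_def)
  then have "(\<Sum>s<8. Amat k $$ (xor i 4, s) * M $$ (s, j)) = (\<Sum>s<8. Amat k $$ (i, s) * M $$ (s, j))"
    by (intro sum.cong) simp_all
  then show ?thesis
    using assms by (simp add: mult_mat_entry[OF Amat_carrier assms(3)] xor_less_8)
qed

lemma prodA_flip_prefix:
  assumes "4 \<le> k" "k < 8" "\<forall>l\<in>set w2. l < 4" "i < 8" "j < 4"
  shows "prodA (map (\<lambda>l. xor l 4) w1 @ k # w2) $$ (xor i 4, j) = prodA (w1 @ k # w2) $$ (i, j)"
proof -
  define Q where "Q = Amat k * prodA w2"
  have Q: "Q \<in> carrier_mat 8 8"
    using mult_carrier_mat[OF Amat_carrier prodA_carrier] by (simp add: Q_def)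
  have Q_flip: "Q $$ (xor s 4, j) = Q $$ (s, j)" if "s < 8" for s
    unfolding Q_def
    using Amat_mult_rows_flip[OF assms(1,2) prodA_carrier block_upper_prodA[OF assms(3)] that assms(5)] .
  have prodA_split: "prodA (u @ k # w2) = prodA u * Q" for u
    by (simp add: prodA_append prodA_Cons Q_def)
  have xor_xor: "xor (xor s 4) 4 = s" for s :: nat
    by (simp add: xor.assoc)
  have "prodA (map (\<lambda>l. xor l 4) w1 @ k # w2) $$ (xor i 4, j)
      = (\<Sum>s<8. prodA (map (\<lambda>l. xor l 4) w1) $$ (xor i 4, s) * Q $$ (s, j))"
    using assms by (simp add: prodA_split mult_mat_entry[OF prodA_carrier Q] xor_less_8)
  also have "\<dots> = (\<Sum>s<8. prodA w1 $$ (i, xor s 4) * Q $$ (s, j))"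
    using assms by (simp add: prodA_map_xor xor_less_8 xor_xor)
  also have "\<dots> = (\<Sum>s<8. prodA w1 $$ (i, s) * Q $$ (xor s 4, j))"
    using sum_xor_reindex[of 4 "\<lambda>s. prodA w1 $$ (i, s) * Q $$ (xor s 4, j)"] by (simp add: xor_xor)
  also have "\<dots> = (\<Sum>s<8. prodA w1 $$ (i, s) * Q $$ (s, j))"
    by (simp add: Q_flip)
  also have "\<dots> = prodA (w1 @ k # w2) $$ (i, j)"
    using assms by (simp add: prodA_split mult_mat_entry[OF prodA_carrier Q])
  finally show ?thesis .
qed

theorem lemma2:
  fixes n :: nat and \<alpha> \<beta> \<gamma> :: "bool list"
  assumes "length \<alpha> = n" "length \<beta> = n" "length \<gamma> = n"
    and "\<alpha> \<noteq> replicate n False"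
    and "i < 8"
  shows "prodA (omega \<alpha> \<beta> \<gamma>) $$ (i, 0)
       = prodA (omega (bits_neg \<alpha>) \<beta> \<gamma>) $$ (xor i 4, 0)"
proof -
  have "True \<in> set \<alpha>"
    using assms(1,4) by (metis (full_types) replicate_length_same)
  then obtain pre m where \<alpha>: "\<alpha> = pre @ True # replicate m False"
    by (rule last_True_decomp)
  have "length pre < length \<beta>" "length pre < length \<gamma>"
    using assms(1-3) \<alpha> by simp_all
  then obtain b1 b b2 c1 c c2
    where \<beta>: "\<beta> = b1 @ b # b2" "length b1 = length pre"
      and \<gamma>: "\<gamma> = c1 @ c # c2" "length c1 = length pre"
    by (metis id_take_nth_drop length_take min.absorb2 less_imp_le)
  define k :: nat where "k = 4 + 2 * of_bool b + of_bool c"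
  have k: "4 \<le> k" "k < 8"
    by (simp_all add: k_def)
  have "omega \<alpha> \<beta> \<gamma> = omega pre b1 c1 @ k # omega (replicate m False) b2 c2"
    and "omega (bits_neg \<alpha>) \<beta> \<gamma>
      = map (\<lambda>l. xor l 4) (omega pre b1 c1) @ k # omega (replicate m False) b2 c2"
    by (simp_all add: \<alpha> \<beta> \<gamma> bits_neg_last_True omega_append omega_Cons omega_map_Not k_def)
  then show ?thesis
    using prodA_flip_prefix[OF k _ assms(5), of _ 0] omega_replicate_False_less_4 by simp
qed

end
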